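(* Let $X$ be a space such that $\mathcal{N}_\Delta^{X^2}$ has calibre $(\omega_1,\omega)$. If $X$ is countably compact then $X$ is compact (and metrizable).
   Context: All spaces are Tychonoff. $\mathcal{N}_\Delta^{X^2}$ is the family of open neighborhoods of the diagonal $\Delta$ in $X^2$, ordered by reverse inclusion. A directed set has calibre $(\omega_1,\omega)$ if every uncountable subset contains an infinite subset with an upper bound. *)

theory Defs
  imports "HOL-Analysis.Analysis"
begin

definition tychonoff_space :: "'a topology \<Rightarrow> bool" where
  "tychonoff_space X \<longleftrightarrow> completely_regular_space X \<and> t1_space X"

definition countably_compact_space :: "'a topology \<Rightarrow> bool" where
  "countably_compact_space X \<longleftrightarrow>
     (\<forall>\<C>. countable \<C> \<and> (\<forall>U\<in>\<C>. openin X U) \<and> topspace X \<subseteq> \<Union>\<C>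
        \<longrightarrow> (\<exists>\<F>\<subseteq>\<C>. finite \<F> \<and> topspace X \<subseteq> \<Union>\<F>))"

definition diag_nbhds :: "'a topology \<Rightarrow> ('a \<times> 'a) set set" where
  "diag_nbhds X = {U. openin (prod_topology X X) U \<and> (\<lambda>x. (x, x)) ` topspace X \<subseteq> U}"

definition calibre_omega1_omega :: "'b set \<Rightarrow> ('b \<Rightarrow> 'b \<Rightarrow> bool) \<Rightarrow> bool" where
  "calibre_omega1_omega D le \<longleftrightarrow>
     (\<forall>S\<subseteq>D. uncountable S \<longrightarrow> (\<exists>T\<subseteq>S. infinite T \<and> (\<exists>u\<in>D. \<forall>t\<in>T. le t u)))"

end

theory Submission
  imports Defs
begin

text \<open>
  Compactness: if an open cover had no countable subcover, a maximality argument (standing in for a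
  transfinite recursion) gives uncountably many points x, each with a cover member V x \<ni> x, such
  that of any two points one lies outside the other's set. The neighbourhoods
  V x \<times> V x \<union> (X - {x}) \<times> (X - {x}) of the diagonal then have infinitely many members above a common u, and those
  points form an infinite set that every point has a neighbourhood meeting at most once: a closed
  discrete set, impossible in a countably compact space.

  Metrizability: choose a maximal family M of continuous maps X \<rightarrow> [0,1] that are pairwise at sup
  distance \<ge> 1/2. If M were uncountable, the calibre would give an infinite subfamily that is
  equicontinuous over one neighbourhood u of the diagonal; by compactness and the pigeonhole principle
  two of its members are closer than 1/2. So M is countable, and being a 1/2-net among the maps that
  separate points of a Tychonoff space, it embeds the compact space X into a countable power of \<real>.
\<close>

text \<open>In a T1 space these are exactly the closed discrete sets.\<close>

definition locally_subsingleton :: "'a topology \<Rightarrow> 'a set \<Rightarrow> bool" where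
  "locally_subsingleton X A \<longleftrightarrow>
     (\<forall>z\<in>topspace X. \<exists>N. openin X N \<and> z \<in> N \<and> (\<forall>a\<in>A \<inter> N. \<forall>b\<in>A \<inter> N. a = b))"

lemma maximal_pairwise_subset:
  obtains M where "M \<subseteq> C" "pairwise R M" "\<And>c. c \<in> C \<Longrightarrow> c \<notin> M \<Longrightarrow> \<exists>m\<in>M. \<not> R c m \<or> \<not> R m c"
proof -
  define \<A> where "\<A> = {M. M \<subseteq> C \<and> pairwise R M}"
  have "\<Union>\<C> \<in> \<A>" if "\<C> \<in> chains \<A>" for \<C>
  proof -
    have "\<C> \<subseteq> \<A>" "chain\<^sub>\<subseteq> \<C>" using that by (simp_all add: chains_def)
    then show ?thesis unfolding \<A>_def by (auto intro: pairwise_chain_Union)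
  qed
  then obtain M where "M \<in> \<A>" and max: "\<forall>S\<in>\<A>. M \<subseteq> S \<longrightarrow> S = M"
    using Zorn_Lemma by blast
  then have M: "M \<subseteq> C" "pairwise R M" by (simp_all add: \<A>_def)
  show thesis
  proof (rule that[OF M])
    fix c assume "c \<in> C" "c \<notin> M"
    then have "\<not> pairwise R (insert c M)"
      using max M(1) unfolding \<A>_def by blast
    then show "\<exists>m\<in>M. \<not> R c m \<or> \<not> R m c"
      using M(2) by (auto simp: pairwise_insert)
  qed
qed

lemma calibre_omega1_omega_indexed:
  assumes cal: "calibre_omega1_omega D le" and refl: "\<And>d. d \<in> D \<Longrightarrow> le d d"
    and "uncountable I" and WI: "W ` I \<subseteq> D"
  obtains J u where "J \<subseteq> I" "infinite J" "u \<in> D" "\<And>i. i \<in> J \<Longrightarrow> le (W i) u"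
proof (cases "countable (W ` I)")
  case True
  \<comment> \<open>then W is constant on an infinite fibre, which only reflexivity can bound\<close>
  have "\<exists>d\<in>W ` I. uncountable {i\<in>I. W i = d}"
  proof (rule ccontr)
    assume "\<not> ?thesis"
    then have "countable (\<Union>d\<in>W ` I. {i\<in>I. W i = d})" using True by (intro countable_UN) auto
    moreover have "I = (\<Union>d\<in>W ` I. {i\<in>I. W i = d})" by blast
    ultimately show False using \<open>uncountable I\<close> by simp
  qed
  then obtain d where "d \<in> W ` I" "uncountable {i\<in>I. W i = d}" by blast
  then show thesis
    using WI refl countable_finite by (intro that[of "{i\<in>I. W i = d}" d]) auto
next
  case False
  then have "\<exists>T\<subseteq>W ` I. infinite T \<and> (\<exists>u\<in>D. \<forall>t\<in>T. le t u)"
    using cal WI unfolding calibre_omega1_omega_def by simp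
  then obtain T u where T: "T \<subseteq> W ` I" "infinite T" "u \<in> D" "\<forall>t\<in>T. le t u"
    by blast
  have "W ` {i\<in>I. W i \<in> T} = T" using T(1) by blast
  then have "infinite {i\<in>I. W i \<in> T}" using T(2) by (metis finite_imageI)
  then show thesis using T(3,4) by (intro that[of "{i\<in>I. W i \<in> T}" u]) auto
qed

lemma diag_nbhds_square:
  assumes "u \<in> diag_nbhds X" and "z \<in> topspace X"
  obtains N where "openin X N" "z \<in> N" "N \<times> N \<subseteq> u"
proof -
  have "openin (prod_topology X X) u" "(z, z) \<in> u"
    using assms unfolding diag_nbhds_def by auto
  then obtain U V where "openin X U" "openin X V" "z \<in> U" "z \<in> V" "U \<times> V \<subseteq> u"
    unfolding openin_prod_topology_alt by meson
  then show thesis using that[of "U \<inter> V"] by blast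
qed

lemma countably_compact_space_decseq_Inter_nonempty:
  assumes cc: "countably_compact_space X" and closed: "\<And>n. closedin X (F n)"
    and nonempty: "\<And>n. F n \<noteq> {}" and "decseq F"
  shows "(\<Inter>n. F n) \<noteq> {}"
proof
  assume "(\<Inter>n. F n) = {}"
  then have "topspace X \<subseteq> \<Union>(range (\<lambda>n. topspace X - F n))" by auto
  moreover have "\<forall>U\<in>range (\<lambda>n. topspace X - F n). openin X U" using closed by blast
  ultimately obtain \<K> where "\<K> \<subseteq> range (\<lambda>n. topspace X - F n)" "finite \<K>" "topspace X \<subseteq> \<Union>\<K>"
    using cc unfolding countably_compact_space_def by (meson countable_image countableI_type)
  then obtain K where K: "finite K" "topspace X \<subseteq> (\<Union>n\<in>K. topspace X - F n)"
    by (metis finite_subset_image)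
  define m where "m = Max (insert 0 K)"
  have "F m \<subseteq> F n" if "n \<in> K" for n
    using \<open>decseq F\<close> K(1) that by (simp add: m_def decseq_def)
  then have "F m \<inter> topspace X = {}" using K(2) by blast
  then show False using nonempty closedin_subset[OF closed] by blast
qed

lemma locally_subsingleton_subset:
  "locally_subsingleton X B \<Longrightarrow> A \<subseteq> B \<Longrightarrow> locally_subsingleton X A"
  unfolding locally_subsingleton_def by (meson IntE IntI subsetD)

lemma locally_subsingleton_imp_closedin:
  assumes t1: "t1_space X" and BX: "B \<subseteq> topspace X" and loc: "locally_subsingleton X B"
  shows "closedin X B"
proof -
  have "\<exists>T. openin X T \<and> x \<in> T \<and> T \<subseteq> topspace X - B" if x: "x \<in> topspace X - B" for x
  proof -
    obtain N where N: "openin X N" "x \<in> N" "\<forall>a\<in>B \<inter> N. \<forall>b\<in>B \<inter> N. a = b"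
      using loc x unfolding locally_subsingleton_def by blast
    have "finite (B \<inter> N)"
    proof (cases "B \<inter> N = {}")
      case False
      then obtain b where "b \<in> B \<inter> N" by blast
      then have "B \<inter> N \<subseteq> {b}" using N(3) by blast
      then show ?thesis using finite_subset by blast
    qed simp
    then have "closedin X (B \<inter> N)" using t1 BX by (meson t1_space_closedin_finite le_infI1)
    then have "openin X (N - B \<inter> N)" using N(1) by (simp add: openin_diff)
    then show ?thesis using N(2) x openin_subset[OF N(1)] by (intro exI[of _ "N - B \<inter> N"]) auto
  qed
  then have "openin X (topspace X - B)" by (subst openin_subopen) blast
  then show ?thesis using BX by (simp add: closedin_def)
qed

lemma countably_compact_locally_subsingleton_imp_finite:
  assumes cc: "countably_compact_space X" and t1: "t1_space X" and AX: "A \<subseteq> topspace X"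
    and loc: "locally_subsingleton X A"
  shows "finite A"
proof (rule ccontr)
  assume "infinite A"
  then obtain c :: "nat \<Rightarrow> 'a" where c: "inj c" "range c \<subseteq> A"
    using infinite_countable_subset by blast
  define F where "F n = c ` {n..}" for n
  have FA: "F n \<subseteq> A" for n using c(2) by (auto simp: F_def)
  then have "closedin X (F n)" for n
    using AX loc by (meson locally_subsingleton_imp_closedin[OF t1] locally_subsingleton_subset order_trans)
  moreover have "F n \<noteq> {}" for n by (simp add: F_def)
  moreover have "decseq F" by (auto simp: decseq_def F_def)
  moreover have "(\<Inter>n. F n) = {}"
  proof (rule equals0I)
    fix x assume x: "x \<in> (\<Inter>n. F n)"
    then obtain m where "x = c m" by (auto simp: F_def)
    moreover have "x \<in> F (Suc m)" using x by blast
    ultimately show False using c(1) by (auto simp: F_def inj_eq)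
  qed
  ultimately show False using countably_compact_space_decseq_Inter_nonempty[OF cc] by blast
qed

lemma uncountable_separated_subset:
  assumes mem: "\<And>x. x \<in> S \<Longrightarrow> x \<in> V x"
    and no_countable: "\<And>T. T \<subseteq> S \<Longrightarrow> countable T \<Longrightarrow> \<not> S \<subseteq> (\<Union>x\<in>T. V x)"
  obtains M where "M \<subseteq> S" "uncountable M" "pairwise (\<lambda>x y. y \<notin> V x \<or> x \<notin> V y) M"
proof -
  obtain M where M: "M \<subseteq> S" and sep: "pairwise (\<lambda>x y. y \<notin> V x \<or> x \<notin> V y) M"
    and max: "\<And>y. y \<in> S \<Longrightarrow> y \<notin> M \<Longrightarrow>
      \<exists>m\<in>M. \<not> (m \<notin> V y \<or> y \<notin> V m) \<or> \<not> (y \<notin> V m \<or> m \<notin> V y)"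
    using maximal_pairwise_subset[of S "\<lambda>x y. y \<notin> V x \<or> x \<notin> V y"] by blast
  have "uncountable M"
  proof
    assume "countable M"
    then obtain y where y: "y \<in> S" "y \<notin> (\<Union>x\<in>M. V x)" using no_countable M by blast
    then have "y \<notin> M" using mem M by blast
    then show False using max[OF y(1)] y(2) by blast
  qed
  then show thesis using that M sep by blast
qed

lemma Times_Un_punctured_in_diag_nbhds:
  assumes "t1_space X" and "openin X U" and "x \<in> U"
  shows "U \<times> U \<union> (topspace X - {x}) \<times> (topspace X - {x}) \<in> diag_nbhds X"
proof -
  have "openin X (topspace X - {x})"
    using assms(1) by (simp add: t1_space_openin_delete_alt)
  then have "openin (prod_topology X X) (U \<times> U \<union> (topspace X - {x}) \<times> (topspace X - {x}))"
    using assms(2) by (intro openin_Un) (simp_all add: openin_prod_Times_iff)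
  then show ?thesis using assms(3) unfolding diag_nbhds_def by auto
qed

lemma locally_subsingleton_below_punctured_squares:
  assumes u: "u \<in> diag_nbhds X"
    and below: "\<And>x. x \<in> J \<Longrightarrow> u \<subseteq> V x \<times> V x \<union> (topspace X - {x}) \<times> (topspace X - {x})"
    and sep: "pairwise (\<lambda>x y. y \<notin> V x \<or> x \<notin> V y) J"
  shows "locally_subsingleton X J"
  unfolding locally_subsingleton_def
proof
  fix z assume "z \<in> topspace X"
  then obtain N where N: "openin X N" "z \<in> N" "N \<times> N \<subseteq> u"
    using diag_nbhds_square[OF u] by blast
  have "a = b" if ab: "a \<in> J \<inter> N" "b \<in> J \<inter> N" for a b
  proof (rule ccontr)
    assume "a \<noteq> b"
    moreover have "(a, b) \<in> u" "(b, a) \<in> u" using N(3) ab by blast+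
    ultimately have "b \<in> V a" "a \<in> V b" using below ab by blast+
    then show False using sep ab \<open>a \<noteq> b\<close> unfolding pairwise_def by blast
  qed
  then show "\<exists>N. openin X N \<and> z \<in> N \<and> (\<forall>a\<in>J \<inter> N. \<forall>b\<in>J \<inter> N. a = b)"
    using N(1,2) by blast
qed

lemma countably_compact_calibre_imp_compact:
  assumes t1: "t1_space X" and cal: "calibre_omega1_omega (diag_nbhds X) (\<lambda>U V. V \<subseteq> U)"
    and cc: "countably_compact_space X"
  shows "compact_space X"
  unfolding compact_space_alt
proof (intro allI impI)
  fix \<U> assume \<U>: "(\<forall>U\<in>\<U>. openin X U) \<and> topspace X \<subseteq> \<Union>\<U>"
  show "\<exists>\<F>. finite \<F> \<and> \<F> \<subseteq> \<U> \<and> topspace X \<subseteq> \<Union>\<F>"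
  proof (rule ccontr)
    assume no_finite: "\<not> ?thesis"
    have "\<exists>U\<in>\<U>. x \<in> U" if "x \<in> topspace X" for x using \<U> that by blast
    then obtain V where V: "\<And>x. x \<in> topspace X \<Longrightarrow> V x \<in> \<U> \<and> x \<in> V x" by metis
    have no_countable: "\<not> topspace X \<subseteq> (\<Union>x\<in>T. V x)"
      if T: "T \<subseteq> topspace X" "countable T" for T
    proof
      assume "topspace X \<subseteq> (\<Union>x\<in>T. V x)"
      moreover have "V ` T \<subseteq> \<U>" using V T(1) by blast
      moreover have "\<forall>U\<in>V ` T. openin X U" using \<U> \<open>V ` T \<subseteq> \<U>\<close> by blast
      ultimately have "\<exists>\<F>\<subseteq>V ` T. finite \<F> \<and> topspace X \<subseteq> \<Union>\<F>"
        using cc T(2) unfolding countably_compact_space_def by simp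
      then show False using no_finite \<open>V ` T \<subseteq> \<U>\<close> by (meson subset_trans)
    qed
    obtain M where M: "M \<subseteq> topspace X" "uncountable M"
      and sep: "pairwise (\<lambda>x y. y \<notin> V x \<or> x \<notin> V y) M"
      using uncountable_separated_subset[of "topspace X" V, OF _ no_countable] V by blast
    define W where "W x = V x \<times> V x \<union> (topspace X - {x}) \<times> (topspace X - {x})" for x
    have "W x \<in> diag_nbhds X" if "x \<in> M" for x
      unfolding W_def using Times_Un_punctured_in_diag_nbhds[OF t1] M(1) V \<U> that by blast
    then obtain J u where J: "J \<subseteq> M" "infinite J" and u: "u \<in> diag_nbhds X" "\<And>x. x \<in> J \<Longrightarrow> u \<subseteq> W x"
      using calibre_omega1_omega_indexed[OF cal _ M(2), of W] by blast
    have "locally_subsingleton X J"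
      using locally_subsingleton_below_punctured_squares[OF u(1)] u(2) pairwise_subset[OF sep J(1)]
      unfolding W_def by blast
    then show False
      using countably_compact_locally_subsingleton_imp_finite[OF cc t1] J M(1) by blast
  qed
qed

lemma exists_separated_net:
  fixes C :: "('a \<Rightarrow> real) set" and \<epsilon> :: real
  assumes "\<epsilon> > 0"
  obtains M where "M \<subseteq> C" "pairwise (\<lambda>f g. \<exists>z\<in>S. \<epsilon> \<le> \<bar>f z - g z\<bar>) M"
    "\<And>h. h \<in> C \<Longrightarrow> \<exists>g\<in>M. \<forall>z\<in>S. \<bar>h z - g z\<bar> < \<epsilon>"
proof -
  obtain M where M: "M \<subseteq> C" "pairwise (\<lambda>f g. \<exists>z\<in>S. \<epsilon> \<le> \<bar>f z - g z\<bar>) M"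
    and max: "\<And>h. h \<in> C \<Longrightarrow> h \<notin> M \<Longrightarrow>
      \<exists>g\<in>M. \<not> (\<exists>z\<in>S. \<epsilon> \<le> \<bar>h z - g z\<bar>) \<or> \<not> (\<exists>z\<in>S. \<epsilon> \<le> \<bar>g z - h z\<bar>)"
    using maximal_pairwise_subset[of C "\<lambda>f g. \<exists>z\<in>S. \<epsilon> \<le> \<bar>f z - g z\<bar>"] by blast
  have "\<exists>g\<in>M. \<forall>z\<in>S. \<bar>h z - g z\<bar> < \<epsilon>" if "h \<in> C" for h
  proof (cases "h \<in> M")
    case True
    then show ?thesis using assms by (intro bexI[of _ h]) auto
  next
    case False
    then show ?thesis using max[OF that] by (auto simp: abs_minus_commute not_le)
  qed
  then show thesis using that M by blast
qed

lemma abs_diff_less_if_floor_divide_eq: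
  fixes a b \<epsilon> :: real
  assumes "\<epsilon> > 0" and "\<lfloor>a / \<epsilon>\<rfloor> = \<lfloor>b / \<epsilon>\<rfloor>"
  shows "\<bar>a - b\<bar> < \<epsilon>"
proof -
  have "\<bar>a / \<epsilon> - b / \<epsilon>\<bar> < 1"
    using floor_correct[of "a / \<epsilon>"] floor_correct[of "b / \<epsilon>"] assms(2) by linarith
  then have "\<bar>a - b\<bar> / \<epsilon> < 1"
    by (metis abs_divide abs_of_pos assms(1) diff_divide_distrib)
  then show ?thesis using assms(1) by simp
qed

lemma compact_space_diag_nbhd_finite_net:
  assumes comp: "compact_space X" and u: "u \<in> diag_nbhds X"
  obtains Z where "finite Z" "Z \<subseteq> topspace X" "\<And>x. x \<in> topspace X \<Longrightarrow> \<exists>z\<in>Z. (z, x) \<in> u"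
proof -
  have "\<exists>N. openin X N \<and> z \<in> N \<and> N \<times> N \<subseteq> u" if "z \<in> topspace X" for z
    using diag_nbhds_square[OF u that] by blast
  then obtain N where N: "\<And>z. z \<in> topspace X \<Longrightarrow> openin X (N z) \<and> z \<in> N z \<and> N z \<times> N z \<subseteq> u"
    by metis
  then have "\<forall>V\<in>N ` topspace X. openin X V" "topspace X \<subseteq> \<Union>(N ` topspace X)" by blast+
  then obtain \<F> where "finite \<F>" "\<F> \<subseteq> N ` topspace X" "topspace X \<subseteq> \<Union>\<F>"
    using comp unfolding compact_space_alt by meson
  then obtain Z where Z: "Z \<subseteq> topspace X" "finite Z" "topspace X \<subseteq> (\<Union>z\<in>Z. N z)"
    by (metis finite_subset_image)
  have "\<exists>z\<in>Z. (z, x) \<in> u" if "x \<in> topspace X" for x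
    using that Z N by blast
  then show thesis using that Z(1,2) by blast
qed

lemma compact_space_uniformly_close_pair:
  fixes \<epsilon> :: real
  assumes comp: "compact_space X" and u: "u \<in> diag_nbhds X" and "\<epsilon> > 0" and "infinite J"
    and range: "\<And>f. f \<in> J \<Longrightarrow> f ` topspace X \<subseteq> {0..1}"
    and equi: "\<And>f x y. f \<in> J \<Longrightarrow> (x, y) \<in> u \<Longrightarrow> \<bar>f x - f y\<bar> < \<epsilon>"
  obtains f g where "f \<in> J" "g \<in> J" "f \<noteq> g" "\<And>x. x \<in> topspace X \<Longrightarrow> \<bar>f x - g x\<bar> < 3 * \<epsilon>"
proof -
  obtain Z where Z: "finite Z" "Z \<subseteq> topspace X" "\<And>x. x \<in> topspace X \<Longrightarrow> \<exists>z\<in>Z. (z, x) \<in> u"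
    using compact_space_diag_nbhd_finite_net[OF comp u] by blast
  define key where "key f = restrict (\<lambda>z. \<lfloor>f z / \<epsilon>\<rfloor>) Z" for f :: "'a \<Rightarrow> real"
  have "key ` J \<subseteq> (\<Pi>\<^sub>E z\<in>Z. {0..\<lceil>1 / \<epsilon>\<rceil>})"
  proof clarify
    fix f assume "f \<in> J"
    have "\<lfloor>f z / \<epsilon>\<rfloor> \<in> {0..\<lceil>1 / \<epsilon>\<rceil>}" if "z \<in> Z" for z
    proof -
      have "f z \<in> {0..1}" using range[OF \<open>f \<in> J\<close>] Z(2) that by blast
      then have "0 \<le> f z / \<epsilon>" "f z / \<epsilon> \<le> 1 / \<epsilon>"
        using \<open>\<epsilon> > 0\<close> by (auto intro: divide_right_mono)
      then show ?thesis by (auto intro: order_trans[OF floor_mono floor_le_ceiling])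
    qed
    then show "key f \<in> (\<Pi>\<^sub>E z\<in>Z. {0..\<lceil>1 / \<epsilon>\<rceil>})" by (simp add: key_def restrict_PiE_iff)
  qed
  moreover have "finite (\<Pi>\<^sub>E z\<in>Z. {0..\<lceil>1 / \<epsilon>\<rceil>})" using Z(1) by (simp add: finite_PiE)
  ultimately have "\<not> inj_on key J"
    using \<open>infinite J\<close> by (metis finite_imageD finite_subset)
  then obtain f g where fg: "f \<in> J" "g \<in> J" "f \<noteq> g" "key f = key g"
    unfolding inj_on_def by blast
  show thesis
  proof (rule that[OF fg(1-3)])
    fix x assume "x \<in> topspace X"
    then obtain z where z: "z \<in> Z" "(z, x) \<in> u" using Z(3) by blast
    then have "\<bar>f z - f x\<bar> < \<epsilon>" "\<bar>g z - g x\<bar> < \<epsilon>" using equi fg(1,2) by blast+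
    moreover have "\<bar>f z - g z\<bar> < \<epsilon>"
      using fun_cong[OF fg(4), of z] z(1) \<open>\<epsilon> > 0\<close>
      by (simp add: key_def abs_diff_less_if_floor_divide_eq)
    ultimately show "\<bar>f x - g x\<bar> < 3 * \<epsilon>" by linarith
  qed
qed

lemma calibre_separated_family_countable:
  assumes comp: "compact_space X" and cal: "calibre_omega1_omega (diag_nbhds X) (\<lambda>U V. V \<subseteq> U)"
    and "(\<epsilon> :: real) > 0" and cont: "\<And>f. f \<in> M \<Longrightarrow> continuous_map X (top_of_set {0..1}) f"
    and sep: "pairwise (\<lambda>f g. \<exists>z\<in>topspace X. \<epsilon> \<le> \<bar>f z - g z\<bar>) M"
  shows "countable M"
proof (rule ccontr)
  assume "uncountable M"
  define W where "W f = {p \<in> topspace (prod_topology X X). \<bar>f (fst p) - f (snd p)\<bar> \<in> {..<\<epsilon> / 3}}"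
    for f :: "'a \<Rightarrow> real"
  have "W f \<in> diag_nbhds X" if "f \<in> M" for f
  proof -
    have "continuous_map X euclideanreal f" using cont[OF that] continuous_map_in_subtopology by blast
    then have "continuous_map (prod_topology X X) euclideanreal (\<lambda>p. \<bar>f (fst p) - f (snd p)\<bar>)"
      by (intro continuous_intros continuous_map_compose[OF continuous_map_fst, unfolded o_def]
          continuous_map_compose[OF continuous_map_snd, unfolded o_def])
    then have "openin (prod_topology X X) (W f)"
      unfolding W_def by (rule openin_continuous_map_preimage) simp
    then show ?thesis using \<open>\<epsilon> > 0\<close> unfolding diag_nbhds_def W_def by auto
  qed
  then obtain J u where J: "J \<subseteq> M" "infinite J" and u: "u \<in> diag_nbhds X" "\<And>f. f \<in> J \<Longrightarrow> u \<subseteq> W f"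
    using calibre_omega1_omega_indexed[OF cal _ \<open>uncountable M\<close>, of W] by blast
  have range: "f ` topspace X \<subseteq> {0..1}" if "f \<in> J" for f
    using cont[of f] that J(1) by (auto simp: continuous_map_in_subtopology)
  have equi: "\<bar>f x - f y\<bar> < \<epsilon> / 3" if "f \<in> J" "(x, y) \<in> u" for f x y
  proof -
    have "(x, y) \<in> W f" using u(2) that by blast
    then show ?thesis by (simp add: W_def)
  qed
  have "\<epsilon> / 3 > 0" using \<open>\<epsilon> > 0\<close> by simp
  then obtain f g where "f \<in> J" "g \<in> J" "f \<noteq> g"
    and close: "\<And>x. x \<in> topspace X \<Longrightarrow> \<bar>f x - g x\<bar> < 3 * (\<epsilon> / 3)"
    using compact_space_uniformly_close_pair[OF comp u(1) _ J(2) range equi] by blast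
  then obtain z where "z \<in> topspace X" "\<epsilon> \<le> \<bar>f z - g z\<bar>"
    using sep J(1) unfolding pairwise_def by blast
  then show False using close by fastforce
qed

lemma compact_space_countable_separating_imp_metrizable:
  fixes M :: "('a \<Rightarrow> real) set"
  assumes comp: "compact_space X" and "countable M"
    and cont: "\<And>g. g \<in> M \<Longrightarrow> continuous_map X euclideanreal g"
    and sep: "\<And>x y. x \<in> topspace X \<Longrightarrow> y \<in> topspace X \<Longrightarrow> x \<noteq> y \<Longrightarrow> \<exists>g\<in>M. g x \<noteq> g y"
  shows "metrizable_space X"
proof -
  define P where "P = product_topology (\<lambda>_. euclideanreal) M"
  define e where "e x = (\<lambda>g\<in>M. g x)" for x
  have "continuous_map X P e"
    unfolding P_def continuous_map_componentwise
  proof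
    show "e ` topspace X \<subseteq> extensional M" by (auto simp: e_def)
    show "\<forall>g\<in>M. continuous_map X euclideanreal (\<lambda>x. e x g)"
      using cont by (simp add: e_def)
  qed
  moreover have "Hausdorff_space P"
    by (simp add: P_def Hausdorff_space_product_topology)
  moreover have "inj_on e (topspace X)"
    using sep unfolding inj_on_def e_def by (metis restrict_apply')
  ultimately have "X homeomorphic_space subtopology P (e ` topspace X)"
    using comp by (simp add: continuous_imp_embedding_map embedding_map_imp_homeomorphic_space)
  moreover have "metrizable_space P"
    unfolding P_def metrizable_space_product_topology
    using \<open>countable M\<close> by (simp add: metrizable_space_euclidean)
  ultimately show ?thesis
    using homeomorphic_metrizable_space metrizable_space_subtopology by blast
qed

lemma compact_calibre_imp_metrizable:
  assumes comp: "compact_space X" and cr: "completely_regular_space X" and t1: "t1_space X"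
    and cal: "calibre_omega1_omega (diag_nbhds X) (\<lambda>U V. V \<subseteq> U)"
  shows "metrizable_space X"
proof -
  define C where "C = {f :: 'a \<Rightarrow> real. continuous_map X (top_of_set {0..1}) f}"
  obtain M where M: "M \<subseteq> C"
    and sep: "pairwise (\<lambda>f g. \<exists>z\<in>topspace X. 1/2 \<le> \<bar>f z - g z\<bar>) M"
    and net: "\<And>h. h \<in> C \<Longrightarrow> \<exists>g\<in>M. \<forall>z\<in>topspace X. \<bar>h z - g z\<bar> < 1/2"
    by (rule exists_separated_net[of "1/2" C "topspace X"]) (simp, blast)
  have "countable M"
    by (rule calibre_separated_family_countable[OF comp cal _ _ sep]) (use M in \<open>auto simp: C_def\<close>)
  moreover have "continuous_map X euclideanreal g" if "g \<in> M" for g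
    using M that by (auto simp: C_def continuous_map_in_subtopology)
  moreover have "\<exists>g\<in>M. g x \<noteq> g y"
    if xy: "x \<in> topspace X" "y \<in> topspace X" "x \<noteq> y" for x y
  proof -
    have "closedin X {y}" "x \<in> topspace X - {y}"
      using t1 xy by (simp_all add: t1_space_closedin_singleton)
    then obtain h :: "'a \<Rightarrow> real"
      where h: "continuous_map X (top_of_set {0..1}) h" "h x = 0" "h ` {y} \<subseteq> {1}"
      using cr unfolding completely_regular_space_def by meson
    then obtain g where g: "g \<in> M" "\<forall>z\<in>topspace X. \<bar>h z - g z\<bar> < 1/2"
      using net[of h] by (auto simp: C_def)
    then have "\<bar>h x - g x\<bar> < 1/2" "\<bar>h y - g y\<bar> < 1/2" using xy by blast+
    then show ?thesis using h(2,3) g(1) by (intro bexI[of _ g]) auto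
  qed
  ultimately show ?thesis by (rule compact_space_countable_separating_imp_metrizable[OF comp])
qed

theorem mainTheorem12:
  fixes X :: "'a topology"
  assumes "tychonoff_space X"
    and "calibre_omega1_omega (diag_nbhds X) (\<lambda>U V. V \<subseteq> U)"
    and "countably_compact_space X"
  shows "compact_space X \<and> metrizable_space X"
proof -
  have "completely_regular_space X" "t1_space X"
    using assms(1) unfolding tychonoff_space_def by auto
  moreover have "compact_space X"
    using countably_compact_calibre_imp_compact \<open>t1_space X\<close> assms(2,3) by blast
  ultimately show ?thesis using compact_calibre_imp_metrizable assms(2) by blast
qed

end
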